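(* Let $Z$ be a reflection positive volume-dependent field theory, let $\Sigma_0,\Sigma_1$ be nonempty closed $(n-1)$-manifolds, and for each $\lambda\in\Lambda_{\Sigma_0,\Sigma_1}$ let $f_\lambda:\mathcal H^\lambda_{\Sigma_0}\to\mathcal H^\lambda_{\Sigma_1}$ be a linear map. Then the not necessarily bounded operator $f^{Hilb}=\sum_{\lambda\in\Lambda_{\Sigma_0,\Sigma_1}}\iota_{1,\lambda}\circ f_\lambda\circ\pi_{0,\lambda}$ from $\mathcal H_{\Sigma_0}$ to $\mathcal H_{\Sigma_1}$ is induced from a morphism of nuclear pairs $(\check f,\hat f)$ from $\check E_{\Sigma_0}\subset\mathcal H_{\Sigma_0}\subset\hat E_{\Sigma_0}$ to $\check E_{\Sigma_1}\subset\mathcal H_{\Sigma_1}\subset\hat E_{\Sigma_1}$ (i.e. continuous $\check f:\check E_{\Sigma_0}\to\check E_{\Sigma_1}$, $\hat f:\hat E_{\Sigma_0}\to\hat E_{\Sigma_1}$ commuting with the inclusions, with $f^{Hilb}$ equal to $\check f$ on $\check E_{\Sigma_0}$) if and only if for all $t>0$ there exists $C>0$ with $\|f_\lambda\|<Ce^{t\lambda}$ for every $\lambda\in\Lambda_{\Sigma_0,\Sigma_1}$.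
   Context: A reflection positive volume-dependent field theory $Z$ (a nuclear, holomorphic, coherent symmetric monoidal functor from $n$-dimensional bordisms of germs equipped with complex densities of positive real part to nuclear pairs — continuous injective dense maps from nuclear dual Fréchet to nuclear Fréchet spaces — which is equivariant for reflection/conjugation and sends reflection-fixed objects to Hermitian nuclear pairs) assigns to each closed $(n-1)$-manifold $\Sigma$ (using a fixed translation-invariant density $\nu_\Sigma\wedge dt$ on $\Sigma\times\mathbb R$, $\nu_\Sigma$ positive of volume 1) a Hilbert space $\mathcal H_\Sigma$ and a self-adjoint operator $H_\Sigma$ with discrete spectrum bounded below and finite-dimensional eigenspaces $\mathcal H_\Sigma^\lambda$, such that cylinders $\Sigma\times I$ of complex volume $s$ act by $\exp(-sH_\Sigma)$; for disconnected $\Sigma$, $\mathcal H_\Sigma$ is the tensor product over components and $H_\Sigma$ the sum of the component Hamiltonians. The Hermitian nuclear pair assigned to $\Sigma$ is $\check E_\Sigma\subset\mathcal H_\Sigma\subset\hat E_\Sigma$ where, writing elements as families $(v_\lambda)\in\prod_{\lambda\in\mathrm{Spec}(H_\Sigma)}\mathcal H^\lambda_\Sigma$: $\check E_\Sigma=\{(v_\lambda):\exists\tau\in\mathbb C_{>0},\ (e^{\tau\lambda}v_\lambda)\in\mathcal H_\Sigma\}$ (colimit of copies of $\mathcal H_\Sigma$ under $e^{-\tau H_\Sigma}$) and $\hat E_\Sigma=\{(v_\lambda):\forall\tau\in\mathbb C_{>0},\ (e^{-\tau\lambda}v_\lambda)\in\mathcal H_\Sigma\}$ with the Fréchet topology given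 by the seminorms $(v_\lambda)\mapsto\|(e^{-\tau_i\lambda}v_\lambda)\|$ for a sequence $\tau_i$ with real parts decreasing to $0$. $\Lambda_{\Sigma_0,\Sigma_1}=\mathrm{Spec}(H_{\Sigma_0})\cap\mathrm{Spec}(H_{\Sigma_1})$; $\pi_{k,\lambda}:\mathcal H_{\Sigma_k}\to\mathcal H^\lambda_{\Sigma_k}$ is the orthogonal projection and $\iota_{k,\lambda}$ the inclusion. *)

theory Defs
  imports "HOL-Analysis.Analysis"
begin

text \<open>
Spectral model of the state space of a closed (n-1)-manifold Sigma.
The spectrum of H_Sigma is a set S of reals; the eigenspace for an eigenvalue l
has dimension d l (finite, at least 1) and is identified, via an orthonormal basis,
with the functions x :: nat => complex vanishing at indices >= d l.
An element of the product over the spectrum of the eigenspaces is a family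
v :: real => nat => complex with v l in the l-eigenspace (and v l = 0 for l not in S).
\<close>

type_synonym fam = "real \<Rightarrow> nat \<Rightarrow> complex"

definition eig :: "nat \<Rightarrow> (nat \<Rightarrow> complex) set" where
  "eig n = {x. \<forall>i\<ge>n. x i = 0}"

definition vnorm :: "nat \<Rightarrow> (nat \<Rightarrow> complex) \<Rightarrow> real" where
  "vnorm n x = sqrt (\<Sum>i<n. (cmod (x i))\<^sup>2)"

definition opnorm :: "nat \<Rightarrow> nat \<Rightarrow> ((nat \<Rightarrow> complex) \<Rightarrow> (nat \<Rightarrow> complex)) \<Rightarrow> real" where
  "opnorm n m g = Sup {vnorm m (g x) | x. x \<in> eig n \<and> vnorm n x \<le> 1}"

definition lin_on :: "(nat \<Rightarrow> complex) set \<Rightarrow> ((nat \<Rightarrow> complex) \<Rightarrow> (nat \<Rightarrow> complex)) \<Rightarrow> bool" where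
  "lin_on A g \<longleftrightarrow> (\<forall>x\<in>A. \<forall>y\<in>A. \<forall>a b::complex.
      g (\<lambda>i. a * x i + b * y i) = (\<lambda>i. a * g x i + b * g y i))"

definition prodE :: "real set \<Rightarrow> (real \<Rightarrow> nat) \<Rightarrow> fam set" where
  "prodE S d = {v. \<forall>l. v l \<in> eig (if l \<in> S then d l else 0)}"

definition in_hilb :: "real set \<Rightarrow> (real \<Rightarrow> nat) \<Rightarrow> fam \<Rightarrow> bool" where
  "in_hilb S d v \<longleftrightarrow> v \<in> prodE S d \<and> (\<lambda>(l,i). (cmod (v l i))\<^sup>2) summable_on UNIV"

definition hilb :: "real set \<Rightarrow> (real \<Rightarrow> nat) \<Rightarrow> fam set" where
  "hilb S d = {v. in_hilb S d v}"

definition hnorm :: "fam \<Rightarrow> real" where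
  "hnorm v = sqrt (infsum (\<lambda>(l,i). (cmod (v l i))\<^sup>2) UNIV)"

text \<open>scale tau v = (e^(tau l) v_l)_l, i.e. the action of e^(tau H).\<close>
definition scale :: "complex \<Rightarrow> fam \<Rightarrow> fam" where
  "scale \<tau> v = (\<lambda>l i. exp (\<tau> * complex_of_real l) * v l i)"

definition fdiff :: "fam \<Rightarrow> fam \<Rightarrow> fam" where
  "fdiff w v = (\<lambda>l i. w l i - v l i)"

definition fadd :: "fam \<Rightarrow> fam \<Rightarrow> fam" where
  "fadd w v = (\<lambda>l i. w l i + v l i)"

definition checkE :: "real set \<Rightarrow> (real \<Rightarrow> nat) \<Rightarrow> fam set" where
  "checkE S d = {v \<in> prodE S d. \<exists>\<tau>. 0 < Re \<tau> \<and> in_hilb S d (scale \<tau> v)}"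

definition hatE :: "real set \<Rightarrow> (real \<Rightarrow> nat) \<Rightarrow> fam set" where
  "hatE S d = {v \<in> prodE S d. \<forall>\<tau>. 0 < Re \<tau> \<longrightarrow> in_hilb S d (scale (- \<tau>) v)}"

definition tau_seq :: "nat \<Rightarrow> complex" where
  "tau_seq i = complex_of_real (1 / real (Suc i))"

definition hat_top :: "real set \<Rightarrow> (real \<Rightarrow> nat) \<Rightarrow> fam topology" where
  "hat_top S d = topology_generated_by
     {{w \<in> hatE S d. hnorm (scale (- tau_seq i) (fdiff w v)) < \<epsilon>} | v i \<epsilon>.
        v \<in> hatE S d \<and> 0 < \<epsilon>}"

definition absconv :: "fam set \<Rightarrow> bool" where
  "absconv W \<longleftrightarrow> (\<forall>x\<in>W. \<forall>y\<in>W. \<forall>a b::complex. cmod a + cmod b \<le> 1 \<longrightarrow>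
      (\<lambda>l i. a * x l i + b * y l i) \<in> W)"

text \<open>Locally convex colimit topology on Check E of the copies of H_Sigma under
  the maps e^(-tau H) (tau in C_{>0}): a set U is open iff around each of its points
  it contains a translate of an absolutely convex set whose preimage in every copy
  is a neighbourhood of 0.\<close>
definition check_top :: "real set \<Rightarrow> (real \<Rightarrow> nat) \<Rightarrow> fam topology" where
  "check_top S d = topology_generated_by
     {U. U \<subseteq> checkE S d \<and>
         (\<forall>v\<in>U. \<exists>W. absconv W \<and>
            (\<forall>\<tau>. 0 < Re \<tau> \<longrightarrow> (\<exists>\<epsilon>>0. \<forall>w. in_hilb S d w \<and> hnorm w < \<epsilon> \<longrightarrow> scale (- \<tau>) w \<in> W)) \<and>
            fadd v ` W \<subseteq> U)}"

definition lin_fam :: "fam set \<Rightarrow> (fam \<Rightarrow> fam) \<Rightarrow> bool" where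
  "lin_fam A g \<longleftrightarrow> (\<forall>x\<in>A. \<forall>y\<in>A. \<forall>a b::complex.
      g (\<lambda>l i. a * x l i + b * y l i) = (\<lambda>l i. a * g x l i + b * g y l i))"

text \<open>f^Hilb = sum over lambda in Lambda of iota_{1,lambda} o f_lambda o pi_{0,lambda}.\<close>
definition fHilb :: "real set \<Rightarrow> real set \<Rightarrow> (real \<Rightarrow> (nat \<Rightarrow> complex) \<Rightarrow> (nat \<Rightarrow> complex)) \<Rightarrow> fam \<Rightarrow> fam" where
  "fHilb S0 S1 f v = (\<lambda>l. if l \<in> S0 \<inter> S1 then f l (v l) else (\<lambda>i. 0))"

text \<open>Spectral data of a Hamiltonian: discrete spectrum bounded below (finitely many
  eigenvalues below any bound) with finite-dimensional nonzero eigenspaces.\<close>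
definition spectral_data :: "real set \<Rightarrow> (real \<Rightarrow> nat) \<Rightarrow> bool" where
  "spectral_data S d \<longleftrightarrow> (\<forall>B. finite {l\<in>S. l \<le> B}) \<and> (\<forall>l\<in>S. 1 \<le> d l)"

end

theory Submission
  imports Defs
begin

text \<open>
Everything is diagonal in the eigenspace decomposition: f^Hilb multiplies the norm of the
l-th block by at most the operator norm of f_l, and e^(tau H) multiplies it by e^(Re tau l).
Hence, if that operator norm is below C e^(t l) for every t > 0, then e^(sigma H) f^Hilb e^(-rho H)
is bounded whenever Re sigma < Re rho (take t = Re rho - Re sigma), and this is all that is
needed for f^Hilb to map Check E into Check E and Hat E into Hat E continuously.

Conversely, a continuous map of Check E must map it into itself. If the bound fails for some
t > 0, then, as the spectrum has only finitely many points below any bound, there are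
eigenvalues l_0 < l_1 < ... with l_k >= k and unit vectors x_k with |f x_k| > e^(t l_k). The
vector sum_k e^(-t l_k) x_k is in the domain of e^(t H / 2), hence in Check E, but its image has
block norms > 1 at every l_k, so it lies in the domain of no e^(tau H) with Re tau > 0.
\<close>

section \<open>Block norms\<close>

definition block_norm2 :: "fam \<Rightarrow> real \<Rightarrow> real" where
  "block_norm2 v l = (\<Sum>\<^sub>\<infinity>i. (cmod (v l i))\<^sup>2)"

lemma vnorm_power2: "(vnorm n x)\<^sup>2 = (\<Sum>i<n. (cmod (x i))\<^sup>2)"
  unfolding vnorm_def by (simp add: sum_nonneg)

lemma has_sum_eig_norm2:
  assumes "x \<in> eig n"
  shows "((\<lambda>i. (cmod (x i))\<^sup>2) has_sum (vnorm n x)\<^sup>2) UNIV"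
proof -
  have "((\<lambda>i. (cmod (x i))\<^sup>2) has_sum (vnorm n x)\<^sup>2) {..<n}"
    unfolding vnorm_power2 by (rule has_sum_finite) simp
  then show ?thesis
    by (rule has_sum_cong_neutral[THEN iffD1, rotated -1]) (use assms in \<open>auto simp: eig_def\<close>)
qed

lemma block_norm2_eig: "v l \<in> eig n \<Longrightarrow> block_norm2 v l = (vnorm n (v l))\<^sup>2"
  unfolding block_norm2_def using has_sum_eig_norm2 infsumI by blast

lemma block_norm2_nonneg: "0 \<le> block_norm2 v l"
  unfolding block_norm2_def by (rule infsum_nonneg) simp

lemma prodE_eig: "v \<in> prodE S d \<Longrightarrow> v l \<in> eig (if l \<in> S then d l else 0)"
  unfolding prodE_def by auto

lemma block_norm2_outside: "v \<in> prodE S d \<Longrightarrow> l \<notin> S \<Longrightarrow> block_norm2 v l = 0"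
  using block_norm2_eig[of v l 0] prodE_eig[of v S d l] by (simp add: vnorm_def)

lemma has_sum_pairs_iff_blocks:
  assumes "v \<in> prodE S d"
  shows "((\<lambda>(l,i). (cmod (v l i))\<^sup>2) has_sum s) UNIV \<longleftrightarrow> (block_norm2 v has_sum s) UNIV"
proof -
  let ?g = "\<lambda>(l,i). (cmod (v l i))\<^sup>2"
  have blocks: "((\<lambda>i. ?g (l,i)) has_sum block_norm2 v l) UNIV" for l
    using has_sum_eig_norm2[OF prodE_eig[OF assms]] block_norm2_eig[OF prodE_eig[OF assms]]
    by simp
  have UNIV_pairs: "(UNIV :: (real \<times> nat) set) = Sigma UNIV (\<lambda>_. UNIV)" by simp
  show ?thesis
  proof
    assume "(?g has_sum s) UNIV"
    then show "(block_norm2 v has_sum s) UNIV"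
      unfolding UNIV_pairs by (rule has_sum_SigmaD) (use blocks in auto)
  next
    assume sum: "(block_norm2 v has_sum s) UNIV"
    then have "?g summable_on Sigma UNIV (\<lambda>_. UNIV)"
      by (intro summable_on_SigmaI[where g = "block_norm2 v"] blocks)
        (use sum summable_on_def in auto)
    then have pairs: "(?g has_sum infsum ?g UNIV) UNIV"
      unfolding UNIV_pairs by (rule has_sum_infsum)
    then have "(block_norm2 v has_sum infsum ?g UNIV) UNIV"
      unfolding UNIV_pairs by (rule has_sum_SigmaD) (use blocks in auto)
    with sum have "s = infsum ?g UNIV"
      by (rule has_sum_unique)
    with pairs show "(?g has_sum s) UNIV"
      by simp
  qed
qed

lemma in_hilb_iff_block_norm2_summable:
  "v \<in> prodE S d \<Longrightarrow> in_hilb S d v \<longleftrightarrow> block_norm2 v summable_on UNIV"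
  by (simp add: in_hilb_def summable_on_def has_sum_pairs_iff_blocks)

lemma hnorm_eq_block_norm2:
  assumes "v \<in> prodE S d"
  shows "hnorm v = sqrt (\<Sum>\<^sub>\<infinity>l. block_norm2 v l)"
proof (cases "block_norm2 v summable_on UNIV")
  case True
  then have "(block_norm2 v has_sum (\<Sum>\<^sub>\<infinity>l. block_norm2 v l)) UNIV"
    by (rule has_sum_infsum)
  then have "((\<lambda>(l,i). (cmod (v l i))\<^sup>2) has_sum (\<Sum>\<^sub>\<infinity>l. block_norm2 v l)) UNIV"
    unfolding has_sum_pairs_iff_blocks[OF assms] .
  then show ?thesis
    unfolding hnorm_def by (simp add: infsumI)
next
  case False
  then have "\<not> (\<lambda>(l,i). (cmod (v l i))\<^sup>2) summable_on UNIV"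
    unfolding summable_on_def has_sum_pairs_iff_blocks[OF assms] .
  then show ?thesis
    unfolding hnorm_def using False by (simp add: infsum_not_exists)
qed

lemma in_hilb_prodE: "in_hilb S d v \<Longrightarrow> v \<in> prodE S d"
  unfolding in_hilb_def by auto

lemma block_norm2_comparison:
  assumes v: "in_hilb S d v" and u: "u \<in> prodE S' d'" and "0 \<le> c"
    and le: "\<And>l. block_norm2 u l \<le> c * block_norm2 v l"
  shows "in_hilb S' d' u" and "hnorm u \<le> sqrt c * hnorm v"
proof -
  have vsum: "(\<lambda>l. c * block_norm2 v l) summable_on UNIV"
    using v in_hilb_prodE in_hilb_iff_block_norm2_summable summable_on_cmult_right by blast
  have usum: "block_norm2 u summable_on UNIV"
    by (rule summable_on_comparison_test[OF vsum]) (use le block_norm2_nonneg in auto)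
  then show "in_hilb S' d' u"
    using in_hilb_iff_block_norm2_summable[OF u] by blast
  have "(\<Sum>\<^sub>\<infinity>l. block_norm2 u l) \<le> (\<Sum>\<^sub>\<infinity>l. c * block_norm2 v l)"
    by (rule infsum_mono[OF usum vsum le])
  also have "\<dots> = c * (\<Sum>\<^sub>\<infinity>l. block_norm2 v l)"
    by (rule infsum_cmult_right')
  finally have "sqrt (\<Sum>\<^sub>\<infinity>l. block_norm2 u l) \<le> sqrt c * sqrt (\<Sum>\<^sub>\<infinity>l. block_norm2 v l)"
    by (simp flip: real_sqrt_mult)
  then show "hnorm u \<le> sqrt c * hnorm v"
    using hnorm_eq_block_norm2[OF u] hnorm_eq_block_norm2[OF in_hilb_prodE[OF v]] by simp
qed

lemma block_norm2_scale: "block_norm2 (scale \<tau> v) l = exp (2 * Re \<tau> * l) * block_norm2 v l"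
proof -
  have "(cmod (scale \<tau> v l i))\<^sup>2 = (exp (Re \<tau> * l))\<^sup>2 * (cmod (v l i))\<^sup>2" for i
    by (simp add: scale_def norm_mult power_mult_distrib)
  moreover have "(exp (Re \<tau> * l))\<^sup>2 = exp (2 * Re \<tau> * l)"
    by (simp add: power2_eq_square flip: exp_add)
  ultimately show ?thesis
    unfolding block_norm2_def by (simp add: infsum_cmult_right')
qed

abbreviation lincomb :: "complex \<Rightarrow> fam \<Rightarrow> complex \<Rightarrow> fam \<Rightarrow> fam" where
  "lincomb a x b y \<equiv> (\<lambda>l i. a * x l i + b * y l i)"

lemma fadd_eq_lincomb: "fadd x y = lincomb 1 x 1 y"
  unfolding fadd_def by simp

lemma fdiff_eq_lincomb: "fdiff x y = lincomb 1 x (-1) y"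
  unfolding fdiff_def by simp

lemma prodE_lincomb: "x \<in> prodE S d \<Longrightarrow> y \<in> prodE S d \<Longrightarrow> lincomb a x b y \<in> prodE S d"
  unfolding prodE_def eig_def by auto

lemma scale_prodE: "v \<in> prodE S d \<Longrightarrow> scale \<tau> v \<in> prodE S d"
  unfolding prodE_def eig_def scale_def by auto

lemma scale_scale: "scale \<sigma> (scale \<tau> v) = scale (\<sigma> + \<tau>) v"
  unfolding scale_def by (simp add: fun_eq_iff exp_add distrib_right mult.assoc)

lemma scale_zero: "scale 0 v = v"
  unfolding scale_def by simp

lemma scale_lincomb: "scale \<tau> (lincomb a x b y) = lincomb a (scale \<tau> x) b (scale \<tau> y)"
  unfolding scale_def by (simp add: fun_eq_iff algebra_simps)

lemma scale_fadd: "scale \<tau> (fadd x y) = fadd (scale \<tau> x) (scale \<tau> y)"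
  unfolding fadd_eq_lincomb scale_lincomb ..

lemma hnorm_zero: "hnorm (\<lambda>l i. 0) = 0"
  unfolding hnorm_def by (simp add: case_prod_unfold)

lemma norm2_lincomb_le:
  fixes a b x y :: complex
  shows "(cmod (a * x + b * y))\<^sup>2 \<le> 2 * (cmod a)\<^sup>2 * (cmod x)\<^sup>2 + 2 * (cmod b)\<^sup>2 * (cmod y)\<^sup>2"
proof -
  have "(cmod (a * x + b * y))\<^sup>2 \<le> (cmod a * cmod x + cmod b * cmod y)\<^sup>2"
    using norm_triangle_ineq[of "a * x" "b * y"] by (simp add: norm_mult power_mono)
  also have "\<dots> \<le> 2 * (cmod a * cmod x)\<^sup>2 + 2 * (cmod b * cmod y)\<^sup>2"
    using zero_le_power2[of "cmod a * cmod x - cmod b * cmod y"]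
    by (simp add: power2_eq_square algebra_simps)
  finally show ?thesis
    by (simp add: power_mult_distrib)
qed

lemma summable_on_norm2_lincomb:
  fixes X Y :: "'a \<Rightarrow> complex"
  assumes "(\<lambda>k. (cmod (X k))\<^sup>2) summable_on A" and "(\<lambda>k. (cmod (Y k))\<^sup>2) summable_on A"
  shows "(\<lambda>k. (cmod (a * X k + b * Y k))\<^sup>2) summable_on A"
proof -
  have "(\<lambda>k. 2 * (cmod a)\<^sup>2 * (cmod (X k))\<^sup>2 + 2 * (cmod b)\<^sup>2 * (cmod (Y k))\<^sup>2) summable_on A"
    by (intro summable_on_add summable_on_cmult_right assms)
  then show ?thesis
    by (rule summable_on_comparison_test) (auto intro: norm2_lincomb_le)
qed

lemma l2_infsum_triangle:
  fixes X Y :: "'a \<Rightarrow> complex"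
  assumes X: "(\<lambda>k. (cmod (X k))\<^sup>2) summable_on A" and Y: "(\<lambda>k. (cmod (Y k))\<^sup>2) summable_on A"
  shows "sqrt (\<Sum>\<^sub>\<infinity>k\<in>A. (cmod (X k + Y k))\<^sup>2)
    \<le> sqrt (\<Sum>\<^sub>\<infinity>k\<in>A. (cmod (X k))\<^sup>2) + sqrt (\<Sum>\<^sub>\<infinity>k\<in>A. (cmod (Y k))\<^sup>2)"
    (is "_ \<le> ?nx + ?ny")
proof -
  have "(\<Sum>\<^sub>\<infinity>k\<in>A. (cmod (X k + Y k))\<^sup>2) \<le> (?nx + ?ny)\<^sup>2"
  proof (rule infsum_le_finite_sums)
    show "(\<lambda>k. (cmod (X k + Y k))\<^sup>2) summable_on A"
      using summable_on_norm2_lincomb[OF X Y, of 1 1] by simp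
  next
    fix F assume F: "finite F" "F \<subseteq> A"
    have "L2_set (\<lambda>k. cmod (X k + Y k)) F \<le> L2_set (\<lambda>k. cmod (X k) + cmod (Y k)) F"
      by (rule L2_set_mono) (auto intro: norm_triangle_ineq)
    also have "\<dots> \<le> L2_set (\<lambda>k. cmod (X k)) F + L2_set (\<lambda>k. cmod (Y k)) F"
      by (rule L2_set_triangle_ineq)
    also have "\<dots> \<le> ?nx + ?ny"
      unfolding L2_set_def
      by (intro add_mono real_sqrt_le_mono finite_sum_le_infsum[OF X F] finite_sum_le_infsum[OF Y F])
        auto
    finally have "(L2_set (\<lambda>k. cmod (X k + Y k)) F)\<^sup>2 \<le> (?nx + ?ny)\<^sup>2"
      by (simp add: power_mono)
    then show "(\<Sum>k\<in>F. (cmod (X k + Y k))\<^sup>2) \<le> (?nx + ?ny)\<^sup>2"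
      unfolding L2_set_def by (simp add: sum_nonneg)
  qed
  then have "sqrt (\<Sum>\<^sub>\<infinity>k\<in>A. (cmod (X k + Y k))\<^sup>2) \<le> sqrt ((?nx + ?ny)\<^sup>2)"
    by (rule real_sqrt_le_mono)
  then show ?thesis
    by (simp add: infsum_nonneg)
qed

lemma norm2_summable_if_in_hilb:
  "in_hilb S d x \<Longrightarrow> (\<lambda>k. (cmod (case_prod x k))\<^sup>2) summable_on UNIV"
  unfolding in_hilb_def by (simp add: case_prod_unfold)

lemma in_hilb_lincomb:
  assumes x: "in_hilb S d x" and y: "in_hilb S d y"
  shows "in_hilb S d (lincomb a x b y)"
proof -
  have "(\<lambda>k. (cmod (a * case_prod x k + b * case_prod y k))\<^sup>2) summable_on UNIV"
    by (rule summable_on_norm2_lincomb[OF norm2_summable_if_in_hilb[OF x]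
          norm2_summable_if_in_hilb[OF y]])
  moreover have "lincomb a x b y \<in> prodE S d"
    using x y in_hilb_prodE prodE_lincomb by blast
  ultimately show ?thesis
    unfolding in_hilb_def by (simp add: case_prod_unfold)
qed

lemma hnorm_fadd_le:
  assumes x: "in_hilb S d x" and y: "in_hilb S d y"
  shows "hnorm (fadd x y) \<le> hnorm x + hnorm y"
  using l2_infsum_triangle[OF norm2_summable_if_in_hilb[OF x] norm2_summable_if_in_hilb[OF y]]
  unfolding hnorm_def fadd_def by (simp add: case_prod_unfold)

lemma spectral_data_bounded_below:
  assumes "spectral_data S d"
  obtains m where "\<And>l. l \<in> S \<Longrightarrow> m \<le> l"
proof
  fix l assume "l \<in> S"
  have "finite {l \<in> S. l \<le> 0}"
    using assms unfolding spectral_data_def by blast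
  then have "\<bar>l\<bar> \<le> (\<Sum>x\<in>{l \<in> S. l \<le> 0}. \<bar>x\<bar>)" if "l \<le> 0"
    using \<open>l \<in> S\<close> that by (intro member_le_sum) auto
  moreover have "0 \<le> (\<Sum>x\<in>{l \<in> S. l \<le> 0}. \<bar>x\<bar>)"
    by (rule sum_nonneg) simp
  ultimately show "- (\<Sum>x\<in>{l \<in> S. l \<le> 0}. \<bar>x\<bar>) \<le> l"
    by (cases "l \<le> 0") auto
qed

lemma in_hilb_scale_nonpos:
  assumes "spectral_data S d" and w: "in_hilb S d w" and "Re \<sigma> \<le> 0"
  shows "in_hilb S d (scale \<sigma> w)"
proof -
  obtain m where m: "\<And>l. l \<in> S \<Longrightarrow> m \<le> l"
    using spectral_data_bounded_below[OF assms(1)] by blast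
  have wE: "w \<in> prodE S d"
    using w by (rule in_hilb_prodE)
  have "block_norm2 (scale \<sigma> w) l \<le> exp (2 * Re \<sigma> * m) * block_norm2 w l" for l
  proof (cases "l \<in> S")
    case True
    have "2 * Re \<sigma> * l \<le> 2 * Re \<sigma> * m"
      using m[OF True] \<open>Re \<sigma> \<le> 0\<close> by (simp add: mult_left_mono_neg)
    then show ?thesis
      unfolding block_norm2_scale by (intro mult_right_mono block_norm2_nonneg) simp
  qed (simp add: block_norm2_scale block_norm2_outside[OF wE])
  then show ?thesis
    by (rule block_norm2_comparison(1)[OF w scale_prodE[OF wE], rotated]) simp
qed

lemma checkE_prodE: "v \<in> checkE S d \<Longrightarrow> v \<in> prodE S d"
  unfolding checkE_def by blast

lemma hatE_prodE: "v \<in> hatE S d \<Longrightarrow> v \<in> prodE S d"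
  unfolding hatE_def by blast

lemma checkE_lincomb:
  assumes sd: "spectral_data S d" and x: "x \<in> checkE S d" and y: "y \<in> checkE S d"
  shows "lincomb a x b y \<in> checkE S d"
proof -
  obtain \<tau>x \<tau>y where \<tau>: "0 < Re \<tau>x" "in_hilb S d (scale \<tau>x x)" "0 < Re \<tau>y" "in_hilb S d (scale \<tau>y y)"
    using x y unfolding checkE_def by blast
  define \<tau> where "\<tau> = complex_of_real (min (Re \<tau>x) (Re \<tau>y))"
  have "in_hilb S d (scale (\<tau> - \<tau>x) (scale \<tau>x x))" "in_hilb S d (scale (\<tau> - \<tau>y) (scale \<tau>y y))"
    using \<tau> by (auto intro!: in_hilb_scale_nonpos[OF sd] simp: \<tau>_def)
  then have "in_hilb S d (scale \<tau> (lincomb a x b y))"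
    unfolding scale_lincomb scale_scale by (simp add: in_hilb_lincomb)
  moreover have "0 < Re \<tau>"
    using \<tau> by (simp add: \<tau>_def)
  ultimately show ?thesis
    using x y prodE_lincomb unfolding checkE_def by blast
qed

lemma hatE_lincomb:
  assumes "x \<in> hatE S d" and "y \<in> hatE S d"
  shows "lincomb a x b y \<in> hatE S d"
  using assms unfolding hatE_def by (auto simp: scale_lincomb intro: prodE_lincomb in_hilb_lincomb)

lemma scale_neg_in_checkE:
  assumes "in_hilb S d w" and "0 < Re \<tau>"
  shows "scale (- \<tau>) w \<in> checkE S d"
  using assms scale_prodE[OF in_hilb_prodE[OF assms(1)]]
  unfolding checkE_def by (auto simp: scale_scale scale_zero)

lemma vnorm_nonneg: "0 \<le> vnorm n x"
  unfolding vnorm_def by (simp add: sum_nonneg)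

lemma vnorm_eq_L2_set: "vnorm n x = L2_set (\<lambda>i. cmod (x i)) {..<n}"
  unfolding vnorm_def L2_set_def by simp

lemma vnorm_scale: "vnorm n (\<lambda>i. c * x i) = cmod c * vnorm n x"
  unfolding vnorm_eq_L2_set by (simp add: L2_set_right_distrib norm_mult)

lemma norm_le_vnorm:
  assumes "k < n"
  shows "cmod (x k) \<le> vnorm n x"
proof -
  have "(cmod (x k))\<^sup>2 \<le> (\<Sum>i<n. (cmod (x i))\<^sup>2)"
    using assms by (intro member_le_sum) auto
  then show ?thesis
    unfolding vnorm_def by (rule real_le_rsqrt)
qed

lemma zero_in_eig: "(\<lambda>i. 0) \<in> eig n"
  unfolding eig_def by simp

lemma vnorm_zero: "vnorm n (\<lambda>i. 0) = 0"
  unfolding vnorm_def by simp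

lemma eig_vnorm_eq_0:
  assumes "x \<in> eig n" and "vnorm n x = 0"
  shows "x = (\<lambda>i. 0)"
proof
  fix i
  show "x i = 0"
    using assms norm_le_vnorm[of i n x] unfolding eig_def by (cases "i < n") auto
qed

lemma lin_onD:
  "lin_on A g \<Longrightarrow> x \<in> A \<Longrightarrow> y \<in> A \<Longrightarrow> g (\<lambda>i. a * x i + b * y i) = (\<lambda>i. a * g x i + b * g y i)"
  unfolding lin_on_def by blast

lemma lin_on_zero: "lin_on (eig n) g \<Longrightarrow> g (\<lambda>i. 0) = (\<lambda>i. 0)"
  using lin_onD[OF _ zero_in_eig zero_in_eig, of n g 0 0] by simp

lemma lin_on_scale:
  "lin_on (eig n) g \<Longrightarrow> x \<in> eig n \<Longrightarrow> g (\<lambda>i. c * x i) = (\<lambda>i. c * g x i)"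
  using lin_onD[of "eig n" g x x c 0] by simp

definition basis_vec :: "nat \<Rightarrow> nat \<Rightarrow> complex" where
  "basis_vec k = (\<lambda>i. if i = k then 1 else 0)"

lemma lin_on_expansion:
  assumes lin: "lin_on (eig n) g" and x: "x \<in> eig n"
  shows "g x = (\<lambda>i. \<Sum>k<n. x k * g (basis_vec k) i)"
proof -
  define trunc where "trunc j = (\<lambda>i. if i < j then x i else 0)" for j
  have trunc_eig: "trunc j \<in> eig n" for j
    using x unfolding trunc_def eig_def by auto
  have basis_eig: "k < n \<Longrightarrow> basis_vec k \<in> eig n" for k
    unfolding basis_vec_def eig_def by auto
  have "j \<le> n \<Longrightarrow> g (trunc j) = (\<lambda>i. \<Sum>k<j. x k * g (basis_vec k) i)" for j
  proof (induction j)
    case 0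
    then show ?case
      using lin_on_zero[OF lin] by (simp add: trunc_def)
  next
    case (Suc j)
    have "trunc (Suc j) = (\<lambda>i. 1 * trunc j i + x j * basis_vec j i)"
      unfolding trunc_def basis_vec_def by (auto simp: fun_eq_iff less_Suc_eq)
    then have "g (trunc (Suc j)) = (\<lambda>i. 1 * g (trunc j) i + x j * g (basis_vec j) i)"
      using lin_onD[OF lin trunc_eig basis_eig, of j 1 j "x j"] Suc.prems by simp
    then show ?case
      using Suc by simp
  qed
  moreover have "trunc n = x"
    using x unfolding trunc_def eig_def by (auto simp: fun_eq_iff)
  ultimately show ?thesis
    by auto
qed

lemma bdd_above_opnorm_set:
  assumes lin: "lin_on (eig n) g"
  shows "bdd_above {vnorm m (g x) | x. x \<in> eig n \<and> vnorm n x \<le> 1}"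
proof -
  have "vnorm m (g x) \<le> (\<Sum>i<m. \<Sum>k<n. cmod (g (basis_vec k) i))"
    if x: "x \<in> eig n" "vnorm n x \<le> 1" for x
  proof -
    have "vnorm m (g x) \<le> (\<Sum>i<m. cmod (g x i))"
      unfolding vnorm_eq_L2_set by (rule L2_set_le_sum) simp
    also have "\<dots> \<le> (\<Sum>i<m. \<Sum>k<n. cmod (x k * g (basis_vec k) i))"
      unfolding lin_on_expansion[OF lin x(1)] by (intro sum_mono norm_sum)
    also have "\<dots> \<le> (\<Sum>i<m. \<Sum>k<n. cmod (g (basis_vec k) i))"
    proof -
      have "cmod (x k) \<le> 1" if "k < n" for k
        using norm_le_vnorm[OF that, of x] x(2) by linarith
      then show ?thesis
        by (intro sum_mono) (auto simp: norm_mult intro!: mult_left_le_one_le)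
    qed
    finally show ?thesis .
  qed
  then show ?thesis
    unfolding bdd_above_def by blast
qed

lemma vnorm_le_opnorm:
  assumes "lin_on (eig n) g" and "x \<in> eig n" and "vnorm n x \<le> 1"
  shows "vnorm m (g x) \<le> opnorm n m g"
  unfolding opnorm_def using assms by (intro cSup_upper bdd_above_opnorm_set) auto

lemma opnorm_nonneg:
  assumes "lin_on (eig n) g"
  shows "0 \<le> opnorm n m g"
  using vnorm_le_opnorm[OF assms zero_in_eig, of m] by (simp add: lin_on_zero[OF assms] vnorm_zero)

lemma vnorm_le_opnorm_mult:
  assumes lin: "lin_on (eig n) g" and x: "x \<in> eig n"
  shows "vnorm m (g x) \<le> opnorm n m g * vnorm n x"
proof (cases "vnorm n x = 0")
  case True
  then show ?thesis
    using eig_vnorm_eq_0[OF x] lin_on_zero[OF lin] by (simp add: vnorm_zero)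
next
  case False
  then have pos: "0 < vnorm n x"
    using vnorm_nonneg[of n x] by simp
  define c where "c = complex_of_real (1 / vnorm n x)"
  have "vnorm n (\<lambda>i. c * x i) = 1"
    unfolding vnorm_scale using pos by (simp add: c_def norm_divide)
  then have "vnorm m (g (\<lambda>i. c * x i)) \<le> opnorm n m g"
    using x by (intro vnorm_le_opnorm[OF lin]) (auto simp: eig_def)
  then have "vnorm m (g x) / vnorm n x \<le> opnorm n m g"
    unfolding lin_on_scale[OF lin x] vnorm_scale using pos by (simp add: c_def norm_divide)
  then show ?thesis
    using pos by (simp add: divide_le_eq)
qed

lemma less_opnorm_witness:
  assumes "lin_on (eig n) g" and "M < opnorm n m g"
  obtains x where "x \<in> eig n" and "vnorm n x \<le> 1" and "M < vnorm m (g x)"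
proof -
  have "{vnorm m (g x) | x. x \<in> eig n \<and> vnorm n x \<le> 1} \<noteq> {}"
    using zero_in_eig vnorm_zero by fastforce
  then show ?thesis
    using assms that less_cSup_iff[OF _ bdd_above_opnorm_set] unfolding opnorm_def by force
qed

section \<open>The topologies of the nuclear pairs\<close>

definition check_zero_nhd :: "real set \<Rightarrow> (real \<Rightarrow> nat) \<Rightarrow> fam set \<Rightarrow> bool" where
  "check_zero_nhd S d W \<longleftrightarrow> absconv W \<and>
     (\<forall>\<tau>. 0 < Re \<tau> \<longrightarrow> (\<exists>\<epsilon>>0. \<forall>w. in_hilb S d w \<and> hnorm w < \<epsilon> \<longrightarrow> scale (- \<tau>) w \<in> W))"

definition check_open :: "real set \<Rightarrow> (real \<Rightarrow> nat) \<Rightarrow> fam set \<Rightarrow> bool" where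
  "check_open S d U \<longleftrightarrow> U \<subseteq> checkE S d \<and> (\<forall>v\<in>U. \<exists>W. check_zero_nhd S d W \<and> fadd v ` W \<subseteq> U)"

lemma check_top_eq: "check_top S d = topology_generated_by (Collect (check_open S d))"
  unfolding check_top_def check_open_def check_zero_nhd_def by simp

lemma check_open_checkE:
  assumes "spectral_data S d"
  shows "check_open S d (checkE S d)"
proof -
  have "absconv (checkE S d)"
    unfolding absconv_def using checkE_lincomb[OF assms] by blast
  then have "check_zero_nhd S d (checkE S d)"
    unfolding check_zero_nhd_def using scale_neg_in_checkE zero_less_one by blast
  moreover have "fadd v ` checkE S d \<subseteq> checkE S d" if "v \<in> checkE S d" for v
    using checkE_lincomb[OF assms that] unfolding fadd_eq_lincomb by blast
  ultimately show ?thesis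
    unfolding check_open_def by blast
qed

lemma topspace_check_top:
  assumes "spectral_data S d"
  shows "topspace (check_top S d) = checkE S d"
proof -
  have "\<Union>(Collect (check_open S d)) = checkE S d"
    using check_open_checkE[OF assms] unfolding check_open_def by blast
  then show ?thesis
    unfolding check_top_eq by simp
qed

definition hat_ball :: "real set \<Rightarrow> (real \<Rightarrow> nat) \<Rightarrow> fam \<Rightarrow> nat \<Rightarrow> real \<Rightarrow> fam set" where
  "hat_ball S d v i \<epsilon> = {w \<in> hatE S d. hnorm (scale (- tau_seq i) (fdiff w v)) < \<epsilon>}"

lemma hat_top_eq:
  "hat_top S d = topology_generated_by {hat_ball S d v i \<epsilon> | v i \<epsilon>. v \<in> hatE S d \<and> 0 < \<epsilon>}"
  unfolding hat_top_def hat_ball_def ..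

lemma center_in_hat_ball: "v \<in> hatE S d \<Longrightarrow> 0 < \<epsilon> \<Longrightarrow> v \<in> hat_ball S d v i \<epsilon>"
  unfolding hat_ball_def fdiff_def scale_def by (simp add: hnorm_zero)

lemma openin_hat_ball:
  assumes "v \<in> hatE S d" and "0 < \<epsilon>"
  shows "openin (hat_top S d) (hat_ball S d v i \<epsilon>)"
proof -
  have "hat_ball S d v i \<epsilon> \<in> {hat_ball S d v i \<epsilon> | v i \<epsilon>. v \<in> hatE S d \<and> 0 < \<epsilon>}"
    using assms by blast
  then show ?thesis
    unfolding hat_top_eq by (rule topology_generated_by_Basis)
qed

lemma topspace_hat_top: "topspace (hat_top S d) = hatE S d"
proof -
  let ?B = "{hat_ball S d v i \<epsilon> | v i \<epsilon>. v \<in> hatE S d \<and> 0 < \<epsilon>}"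
  have "v \<in> \<Union>?B" if "v \<in> hatE S d" for v
  proof -
    have "hat_ball S d v 0 1 \<in> ?B"
      using that zero_less_one by blast
    with center_in_hat_ball[OF that zero_less_one] show ?thesis
      by blast
  qed
  moreover have "\<Union>?B \<subseteq> hatE S d"
    unfolding hat_ball_def by blast
  ultimately have "\<Union>?B = hatE S d"
    by blast
  then show ?thesis
    unfolding hat_top_eq by simp
qed

lemma in_hilb_hat_seminorm: "v \<in> hatE S d \<Longrightarrow> in_hilb S d (scale (- tau_seq i) v)"
  unfolding hatE_def tau_seq_def by simp

lemma hat_ball_subset:
  assumes u: "u \<in> hat_ball S d v i \<epsilon>" and v: "v \<in> hatE S d"
  shows "hat_ball S d u i (\<epsilon> - hnorm (scale (- tau_seq i) (fdiff u v))) \<subseteq> hat_ball S d v i \<epsilon>"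
proof
  fix w assume w: "w \<in> hat_ball S d u i (\<epsilon> - hnorm (scale (- tau_seq i) (fdiff u v)))"
  have uE: "u \<in> hatE S d" and wE: "w \<in> hatE S d"
    using u w unfolding hat_ball_def by auto
  let ?p = "\<lambda>x. scale (- tau_seq i) x"
  have "?p (fdiff w v) = fadd (?p (fdiff w u)) (?p (fdiff u v))"
    unfolding scale_fadd[symmetric] by (simp add: fadd_def fdiff_def)
  moreover have "in_hilb S d (?p (fdiff w u))" and "in_hilb S d (?p (fdiff u v))"
    unfolding fdiff_eq_lincomb by (intro in_hilb_hat_seminorm hatE_lincomb uE wE v)+
  ultimately have "hnorm (?p (fdiff w v)) \<le> hnorm (?p (fdiff w u)) + hnorm (?p (fdiff u v))"
    by (simp add: hnorm_fadd_le)
  then show "w \<in> hat_ball S d v i \<epsilon>"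
    using w wE unfolding hat_ball_def by simp
qed

lemma fHilb_inside: "l \<in> S0 \<inter> S1 \<Longrightarrow> fHilb S0 S1 f v l = f l (v l)"
  unfolding fHilb_def by simp

lemma fHilb_outside: "l \<notin> S0 \<inter> S1 \<Longrightarrow> fHilb S0 S1 f v l = (\<lambda>i. 0)"
  unfolding fHilb_def by (simp only: if_False)

locale blockwise_map =
  fixes S0 S1 :: "real set" and d0 d1 :: "real \<Rightarrow> nat"
    and f :: "real \<Rightarrow> (nat \<Rightarrow> complex) \<Rightarrow> (nat \<Rightarrow> complex)"
  assumes spectral0: "spectral_data S0 d0" and spectral1: "spectral_data S1 d1"
    and lin: "\<And>l. l \<in> S0 \<inter> S1 \<Longrightarrow> lin_on (eig (d0 l)) (f l)"
    and maps_eig: "\<And>l. l \<in> S0 \<inter> S1 \<Longrightarrow> f l ` eig (d0 l) \<subseteq> eig (d1 l)"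
begin

abbreviation T :: "fam \<Rightarrow> fam" where
  "T \<equiv> fHilb S0 S1 f"

lemma fHilb_eig:
  assumes "v \<in> prodE S0 d0" and "l \<in> S0 \<inter> S1"
  shows "T v l \<in> eig (d1 l)"
proof -
  have "v l \<in> eig (d0 l)"
    using prodE_eig[OF assms(1), of l] assms(2) by simp
  then show ?thesis
    using maps_eig[OF assms(2)] by (simp add: fHilb_inside[OF assms(2)] image_subset_iff)
qed

lemma fHilb_prodE:
  assumes "v \<in> prodE S0 d0"
  shows "T v \<in> prodE S1 d1"
proof -
  have "T v l \<in> eig (if l \<in> S1 then d1 l else 0)" for l
  proof (cases "l \<in> S0 \<inter> S1")
    case True
    then show ?thesis
      using fHilb_eig[OF assms True] by simp
  qed (simp add: fHilb_outside zero_in_eig)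
  then show ?thesis
    unfolding prodE_def by blast
qed

lemma fHilb_lincomb:
  assumes x: "x \<in> prodE S0 d0" and y: "y \<in> prodE S0 d0"
  shows "T (lincomb a x b y) = lincomb a (T x) b (T y)"
proof
  fix l
  show "T (lincomb a x b y) l = (\<lambda>i. a * T x l i + b * T y l i)"
  proof (cases "l \<in> S0 \<inter> S1")
    case True
    then have "x l \<in> eig (d0 l)" and "y l \<in> eig (d0 l)"
      using prodE_eig[OF x, of l] prodE_eig[OF y, of l] by simp_all
    then show ?thesis
      using lin_onD[OF lin[OF True]] by (simp add: fHilb_inside[OF True])
  qed (simp add: fHilb_outside)
qed

lemma fHilb_fadd: "x \<in> prodE S0 d0 \<Longrightarrow> y \<in> prodE S0 d0 \<Longrightarrow> T (fadd x y) = fadd (T x) (T y)"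
  unfolding fadd_eq_lincomb by (rule fHilb_lincomb)

lemma fHilb_fdiff: "x \<in> prodE S0 d0 \<Longrightarrow> y \<in> prodE S0 d0 \<Longrightarrow> T (fdiff x y) = fdiff (T x) (T y)"
  unfolding fdiff_eq_lincomb by (rule fHilb_lincomb)

lemma absconv_fHilb_preimage:
  assumes W: "absconv W"
  shows "absconv {w \<in> checkE S0 d0. T w \<in> W}"
  unfolding absconv_def
proof (intro ballI allI impI)
  fix x y a b
  assume x: "x \<in> {w \<in> checkE S0 d0. T w \<in> W}" and y: "y \<in> {w \<in> checkE S0 d0. T w \<in> W}"
    and ab: "cmod a + cmod b \<le> 1"
  have "lincomb a (T x) b (T y) \<in> W"
    using W x y ab unfolding absconv_def by blast
  then show "lincomb a x b y \<in> {w \<in> checkE S0 d0. T w \<in> W}"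
    using x y checkE_lincomb[OF spectral0] fHilb_lincomb checkE_prodE by simp
qed

lemma block_norm2_fHilb_le:
  assumes v: "v \<in> prodE S0 d0" and l: "l \<in> S0 \<inter> S1"
  shows "block_norm2 (T v) l \<le> (opnorm (d0 l) (d1 l) (f l))\<^sup>2 * block_norm2 v l"
proof -
  have vl: "v l \<in> eig (d0 l)"
    using prodE_eig[OF v, of l] l by simp
  have "block_norm2 (T v) l = (vnorm (d1 l) (f l (v l)))\<^sup>2"
    using block_norm2_eig[of "T v" l "d1 l", OF fHilb_eig[OF v l]] by (simp add: fHilb_inside[OF l])
  also have "\<dots> \<le> (opnorm (d0 l) (d1 l) (f l) * vnorm (d0 l) (v l))\<^sup>2"
    by (intro power_mono vnorm_le_opnorm_mult[OF lin[OF l] vl] vnorm_nonneg)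
  also have "\<dots> = (opnorm (d0 l) (d1 l) (f l))\<^sup>2 * block_norm2 v l"
    by (simp add: block_norm2_eig[of v l "d0 l", OF vl] power_mult_distrib)
  finally show ?thesis .
qed

lemma block_norm2_fHilb_outside:
  assumes "l \<notin> S0 \<inter> S1"
  shows "block_norm2 (T v) l = 0"
  by (simp add: block_norm2_def fHilb_outside[OF assms])

lemma block_norm2_scale_fHilb_le:
  assumes bound: "\<forall>l\<in>S0 \<inter> S1. opnorm (d0 l) (d1 l) (f l) < C * exp ((Re \<rho> - Re \<sigma>) * l)"
    and v: "v \<in> prodE S0 d0"
  shows "block_norm2 (scale \<sigma> (T v)) l \<le> C\<^sup>2 * block_norm2 (scale \<rho> v) l"
proof (cases "l \<in> S0 \<inter> S1")
  case True
  define t where "t = Re \<rho> - Re \<sigma>"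
  have opnorm_le: "(opnorm (d0 l) (d1 l) (f l))\<^sup>2 \<le> (C * exp (t * l))\<^sup>2"
    using bound True opnorm_nonneg[OF lin[OF True]] unfolding t_def
    by (intro power_mono) (auto intro: less_imp_le)
  have "block_norm2 (scale \<sigma> (T v)) l = exp (2 * Re \<sigma> * l) * block_norm2 (T v) l"
    by (rule block_norm2_scale)
  also have "\<dots> \<le> exp (2 * Re \<sigma> * l) * ((opnorm (d0 l) (d1 l) (f l))\<^sup>2 * block_norm2 v l)"
    by (intro mult_left_mono block_norm2_fHilb_le[OF v True]) simp
  also have "\<dots> \<le> exp (2 * Re \<sigma> * l) * ((C * exp (t * l))\<^sup>2 * block_norm2 v l)"
    by (intro mult_left_mono mult_right_mono opnorm_le block_norm2_nonneg) simp
  also have "\<dots> = C\<^sup>2 * (exp (2 * Re \<sigma> * l) * (exp (t * l))\<^sup>2) * block_norm2 v l"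
    by (simp add: power_mult_distrib)
  also have "exp (2 * Re \<sigma> * l) * (exp (t * l))\<^sup>2 = exp (2 * Re \<rho> * l)"
    unfolding t_def by (simp add: power2_eq_square algebra_simps flip: exp_add)
  finally show ?thesis
    by (simp add: block_norm2_scale)
qed (simp add: block_norm2_scale block_norm2_fHilb_outside block_norm2_nonneg)

end

section \<open>Sufficiency of the growth bound\<close>

locale subexp_blockwise_map = blockwise_map +
  assumes opnorm_subexp:
    "\<And>t. 0 < t \<Longrightarrow> \<exists>C>0. \<forall>l\<in>S0 \<inter> S1. opnorm (d0 l) (d1 l) (f l) < C * exp (t * l)"
begin

lemma fHilb_scale_bound:
  assumes "Re \<sigma> < Re \<rho>"
  obtains C where "0 < C"
    and "\<And>v. v \<in> prodE S0 d0 \<Longrightarrow> in_hilb S0 d0 (scale \<rho> v) \<Longrightarrow>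
           in_hilb S1 d1 (scale \<sigma> (T v)) \<and> hnorm (scale \<sigma> (T v)) \<le> C * hnorm (scale \<rho> v)"
proof -
  obtain C where C: "0 < C" "\<forall>l\<in>S0 \<inter> S1. opnorm (d0 l) (d1 l) (f l) < C * exp ((Re \<rho> - Re \<sigma>) * l)"
    using opnorm_subexp[of "Re \<rho> - Re \<sigma>"] assms by auto
  show ?thesis
  proof
    fix v assume "v \<in> prodE S0 d0" and "in_hilb S0 d0 (scale \<rho> v)"
    note comparison = block_norm2_comparison[OF this(2) scale_prodE[OF fHilb_prodE[OF this(1)]]
        zero_le_power2 block_norm2_scale_fHilb_le[OF C(2) this(1)]]
    show "in_hilb S1 d1 (scale \<sigma> (T v)) \<and> hnorm (scale \<sigma> (T v)) \<le> C * hnorm (scale \<rho> v)"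
      using comparison C(1) by simp
  qed (rule C(1))
qed

lemma in_hilb_scale_fHilb:
  assumes "Re \<sigma> < Re \<rho>" and "v \<in> prodE S0 d0" and "in_hilb S0 d0 (scale \<rho> v)"
  shows "in_hilb S1 d1 (scale \<sigma> (T v))"
proof -
  obtain C where "\<And>v. v \<in> prodE S0 d0 \<Longrightarrow> in_hilb S0 d0 (scale \<rho> v) \<Longrightarrow>
      in_hilb S1 d1 (scale \<sigma> (T v)) \<and> hnorm (scale \<sigma> (T v)) \<le> C * hnorm (scale \<rho> v)"
    using fHilb_scale_bound[OF assms(1)] by blast
  with assms(2,3) show ?thesis
    by blast
qed

lemma fHilb_checkE:
  assumes v: "v \<in> checkE S0 d0"
  shows "T v \<in> checkE S1 d1"
proof -
  obtain \<tau> where \<tau>: "0 < Re \<tau>" "in_hilb S0 d0 (scale \<tau> v)"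
    using v unfolding checkE_def by blast
  then have "in_hilb S1 d1 (scale (\<tau> / 2) (T v))"
    by (intro in_hilb_scale_fHilb[OF _ checkE_prodE[OF v]]) simp_all
  moreover have "0 < Re (\<tau> / 2)"
    using \<tau>(1) by simp
  ultimately show ?thesis
    using fHilb_prodE[OF checkE_prodE[OF v]] unfolding checkE_def by blast
qed

lemma fHilb_hatE:
  assumes v: "v \<in> hatE S0 d0"
  shows "T v \<in> hatE S1 d1"
proof -
  have "in_hilb S1 d1 (scale (- \<tau>) (T v))" if "0 < Re \<tau>" for \<tau>
  proof -
    have "in_hilb S0 d0 (scale (- (\<tau> / 2)) v)"
      using v that unfolding hatE_def by simp
    then show ?thesis
      using that by (intro in_hilb_scale_fHilb[OF _ hatE_prodE[OF v]]) simp_all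
  qed
  then show ?thesis
    using fHilb_prodE[OF hatE_prodE[OF v]] unfolding hatE_def by blast
qed

lemma check_zero_nhd_preimage:
  assumes W: "check_zero_nhd S1 d1 W"
  shows "check_zero_nhd S0 d0 {w \<in> checkE S0 d0. T w \<in> W}"
  unfolding check_zero_nhd_def
proof (intro conjI allI impI)
  show "absconv {w \<in> checkE S0 d0. T w \<in> W}"
    using W unfolding check_zero_nhd_def by (blast intro: absconv_fHilb_preimage)
next
  fix \<tau> :: complex assume \<tau>: "0 < Re \<tau>"
  obtain \<epsilon> where \<epsilon>: "0 < \<epsilon>" "\<And>u. in_hilb S1 d1 u \<Longrightarrow> hnorm u < \<epsilon> \<Longrightarrow> scale (- (\<tau> / 2)) u \<in> W"
    using W \<tau> unfolding check_zero_nhd_def by (metis Re_divide_numeral half_gt_zero)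
  have half: "Re (\<tau> / 2) < Re \<tau>"
    using \<tau> by simp
  obtain C where C: "0 < C" "\<And>v. v \<in> prodE S0 d0 \<Longrightarrow> in_hilb S0 d0 (scale \<tau> v) \<Longrightarrow>
      in_hilb S1 d1 (scale (\<tau> / 2) (T v)) \<and> hnorm (scale (\<tau> / 2) (T v)) \<le> C * hnorm (scale \<tau> v)"
    using fHilb_scale_bound[OF half] by blast
  show "\<exists>\<delta>>0. \<forall>w. in_hilb S0 d0 w \<and> hnorm w < \<delta> \<longrightarrow> scale (- \<tau>) w \<in> {w \<in> checkE S0 d0. T w \<in> W}"
  proof (intro exI[of _ "\<epsilon> / C"] conjI allI impI)
    show "0 < \<epsilon> / C"
      using \<epsilon>(1) C(1) by simp
    fix w assume w: "in_hilb S0 d0 w \<and> hnorm w < \<epsilon> / C"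
    define u where "u = scale (- \<tau>) w"
    have u: "u \<in> checkE S0 d0"
      unfolding u_def using scale_neg_in_checkE w \<tau> by blast
    have "scale \<tau> u = w"
      unfolding u_def by (simp add: scale_scale scale_zero)
    then have Tu: "in_hilb S1 d1 (scale (\<tau> / 2) (T u))"
        "hnorm (scale (\<tau> / 2) (T u)) \<le> C * hnorm w"
      using C(2)[OF checkE_prodE[OF u]] w by auto
    moreover have "C * hnorm w < \<epsilon>"
      using w C(1) by (simp add: pos_less_divide_eq mult.commute)
    ultimately have "in_hilb S1 d1 (scale (\<tau> / 2) (T u))" and "hnorm (scale (\<tau> / 2) (T u)) < \<epsilon>"
      by simp_all
    then have "scale (- (\<tau> / 2)) (scale (\<tau> / 2) (T u)) \<in> W"
      by (rule \<epsilon>(2))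
    then show "scale (- \<tau>) w \<in> {w \<in> checkE S0 d0. T w \<in> W}"
      using u unfolding u_def by (simp add: scale_scale scale_zero)
  qed
qed

lemma check_open_preimage:
  assumes U: "check_open S1 d1 U"
  shows "check_open S0 d0 (T -` U \<inter> checkE S0 d0)"
  unfolding check_open_def
proof (intro conjI ballI)
  fix v assume v: "v \<in> T -` U \<inter> checkE S0 d0"
  then obtain W where W: "check_zero_nhd S1 d1 W" "fadd (T v) ` W \<subseteq> U"
    using U unfolding check_open_def by blast
  have "fadd v ` {w \<in> checkE S0 d0. T w \<in> W} \<subseteq> T -` U \<inter> checkE S0 d0"
  proof clarify
    fix w assume "w \<in> checkE S0 d0" and "T w \<in> W"
    moreover have "fadd v w \<in> checkE S0 d0"
      using checkE_lincomb[OF spectral0] v \<open>w \<in> checkE S0 d0\<close> unfolding fadd_eq_lincomb by blast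
    ultimately show "fadd v w \<in> T -` U \<inter> checkE S0 d0"
      using W(2) v fHilb_fadd checkE_prodE by auto
  qed
  then show "\<exists>W. check_zero_nhd S0 d0 W \<and> fadd v ` W \<subseteq> T -` U \<inter> checkE S0 d0"
    using check_zero_nhd_preimage[OF W(1)] by blast
qed simp

lemma continuous_map_check: "continuous_map (check_top S0 d0) (check_top S1 d1) T"
  unfolding check_top_eq[of S1 d1]
proof (rule continuous_on_generated_topo)
  fix U assume "U \<in> Collect (check_open S1 d1)"
  then have "openin (check_top S0 d0) (T -` U \<inter> checkE S0 d0)"
    unfolding check_top_eq[of S0 d0]
    by (intro topology_generated_by_Basis CollectI check_open_preimage) simp
  then show "openin (check_top S0 d0) (T -` U \<inter> topspace (check_top S0 d0))"
    by (simp add: topspace_check_top[OF spectral0])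
next
  have "\<Union>(Collect (check_open S1 d1)) = checkE S1 d1"
    using topspace_check_top[OF spectral1] unfolding check_top_eq by simp
  then show "T ` topspace (check_top S0 d0) \<subseteq> \<Union>(Collect (check_open S1 d1))"
    using fHilb_checkE by (auto simp: topspace_check_top[OF spectral0])
qed

lemma fHilb_image_hat_ball:
  obtains C where "0 < C"
    and "\<And>v r. v \<in> hatE S0 d0 \<Longrightarrow> T ` hat_ball S0 d0 v (Suc (2 * i)) (r / C) \<subseteq> hat_ball S1 d1 (T v) i r"
proof -
  have finer: "Re (- tau_seq i) < Re (- tau_seq (Suc (2 * i)))"
    unfolding tau_seq_def by (simp add: field_simps)
  obtain C where C: "0 < C" "\<And>v. v \<in> prodE S0 d0 \<Longrightarrow> in_hilb S0 d0 (scale (- tau_seq (Suc (2 * i))) v) \<Longrightarrow>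
      in_hilb S1 d1 (scale (- tau_seq i) (T v)) \<and>
      hnorm (scale (- tau_seq i) (T v)) \<le> C * hnorm (scale (- tau_seq (Suc (2 * i))) v)"
    using fHilb_scale_bound[OF finer] by blast
  show ?thesis
  proof (rule that[OF C(1)], clarify)
    fix v r w assume v: "v \<in> hatE S0 d0" and w: "w \<in> hat_ball S0 d0 v (Suc (2 * i)) (r / C)"
    then have wE: "w \<in> hatE S0 d0" and small: "C * hnorm (scale (- tau_seq (Suc (2 * i))) (fdiff w v)) < r"
      using C(1) unfolding hat_ball_def by (auto simp: pos_less_divide_eq mult.commute)
    have "fdiff w v \<in> hatE S0 d0"
      unfolding fdiff_eq_lincomb by (rule hatE_lincomb[OF wE v])
    then have "hnorm (scale (- tau_seq i) (T (fdiff w v))) < r"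
      using C(2)[OF hatE_prodE in_hilb_hat_seminorm] small by fastforce
    then show "T w \<in> hat_ball S1 d1 (T v) i r"
      using fHilb_hatE[OF wE] unfolding hat_ball_def fHilb_fdiff[OF hatE_prodE[OF wE] hatE_prodE[OF v]]
      by simp
  qed
qed

lemma continuous_map_hat: "continuous_map (hat_top S0 d0) (hat_top S1 d1) T"
  unfolding hat_top_eq[of S1 d1]
proof (rule continuous_on_generated_topo)
  fix U assume "U \<in> {hat_ball S1 d1 v i \<epsilon> | v i \<epsilon>. v \<in> hatE S1 d1 \<and> 0 < \<epsilon>}"
  then obtain v' i \<epsilon> where U: "U = hat_ball S1 d1 v' i \<epsilon>" and v': "v' \<in> hatE S1 d1"
    by blast
  obtain C where C: "0 < C"
    "\<And>v r. v \<in> hatE S0 d0 \<Longrightarrow> T ` hat_ball S0 d0 v (Suc (2 * i)) (r / C) \<subseteq> hat_ball S1 d1 (T v) i r"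
    using fHilb_image_hat_ball[of i] by blast
  have "\<exists>V. openin (hat_top S0 d0) V \<and> v \<in> V \<and> V \<subseteq> T -` U \<inter> hatE S0 d0"
    if v: "v \<in> T -` U \<inter> hatE S0 d0" for v
  proof (intro exI conjI)
    define r where "r = \<epsilon> - hnorm (scale (- tau_seq i) (fdiff (T v) v'))"
    have r: "0 < r"
      using v unfolding U r_def hat_ball_def by simp
    let ?V = "hat_ball S0 d0 v (Suc (2 * i)) (r / C)"
    show "openin (hat_top S0 d0) ?V" and "v \<in> ?V"
      using v r C(1) by (auto intro: openin_hat_ball center_in_hat_ball)
    have "T ` ?V \<subseteq> U"
      using C(2)[of v r] hat_ball_subset[of "T v" S1 d1 v' i \<epsilon>] v v' unfolding U r_def by auto
    then show "?V \<subseteq> T -` U \<inter> hatE S0 d0"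
      unfolding hat_ball_def by auto
  qed
  then have "openin (hat_top S0 d0) (T -` U \<inter> hatE S0 d0)"
    by (subst openin_subopen) blast
  then show "openin (hat_top S0 d0) (T -` U \<inter> topspace (hat_top S0 d0))"
    by (simp add: topspace_hat_top)
next
  have "\<Union>{hat_ball S1 d1 v i \<epsilon> | v i \<epsilon>. v \<in> hatE S1 d1 \<and> 0 < \<epsilon>} = hatE S1 d1"
    using topspace_hat_top[of S1 d1] unfolding hat_top_eq by simp
  then show "T ` topspace (hat_top S0 d0) \<subseteq> \<Union>{hat_ball S1 d1 v i \<epsilon> | v i \<epsilon>. v \<in> hatE S1 d1 \<and> 0 < \<epsilon>}"
    using fHilb_hatE by (auto simp: topspace_hat_top)
qed

end

section \<open>Necessity of the growth bound\<close>

lemma bounded_by_multiple_off_finite: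
  fixes g h :: "'a \<Rightarrow> real"
  assumes "finite F" and le: "\<And>x. x \<in> A \<Longrightarrow> x \<notin> F \<Longrightarrow> g x \<le> h x" and pos: "\<And>x. 0 < h x"
  shows "\<exists>C>0. \<forall>x\<in>A. g x < C * h x"
proof (intro exI conjI ballI)
  define K where "K = (\<Sum>y\<in>F. \<bar>g y\<bar> / h y)"
  have K: "0 \<le> K"
    unfolding K_def by (intro sum_nonneg divide_nonneg_pos) (auto intro: pos)
  then show "0 < K + 2"
    by simp
  fix x assume "x \<in> A"
  show "g x < (K + 2) * h x"
  proof (cases "x \<in> F")
    case True
    have "\<bar>g x\<bar> / h x \<le> K"
      unfolding K_def using True assms(1) by (intro member_le_sum) (auto intro: divide_nonneg_pos pos)
    then have "g x \<le> K * h x"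
      using pos[of x] by (simp add: divide_le_eq)
    then show ?thesis
      using pos[of x] by (simp add: distrib_right)
  next
    case False
    moreover have "0 \<le> K * h x"
      using K pos[of x] by simp
    ultimately show ?thesis
      using le[OF \<open>x \<in> A\<close>] pos[of x] by (simp add: distrib_right)
  qed
qed

lemma unbounded_imp_sparse_sequence:
  fixes L :: "real set"
  assumes "\<And>B. \<exists>l\<in>L. B \<le> l"
  obtains lam :: "nat \<Rightarrow> real" where "\<And>k. lam k \<in> L" and "\<And>k. real k \<le> lam k" and "strict_mono lam"
proof -
  have "\<exists>lam. \<forall>k. (lam k \<in> L \<and> real k \<le> lam k) \<and> lam k < lam (Suc k)"
  proof (rule dependent_nat_choice)
    show "\<exists>x. x \<in> L \<and> real 0 \<le> x"
      using assms[of 0] by auto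
  next
    fix x k assume "x \<in> L \<and> real k \<le> x"
    then show "\<exists>y. (y \<in> L \<and> real (Suc k) \<le> y) \<and> x < y"
      using assms[of "x + 1"] by force
  qed
  then show ?thesis
    using that strict_mono_Suc_iff by blast
qed

lemma summable_on_exp_sparse:
  assumes "0 < t" and "\<And>k. real k \<le> lam k"
  shows "(\<lambda>k. exp (- t * lam k)) summable_on UNIV"
proof (rule summable_on_comparison_test)
  show "(\<lambda>k::nat. exp (- t) ^ k) summable_on UNIV"
    using assms(1) by (intro summable_nonneg_imp_summable_on summable_geometric) auto
  fix k :: nat
  have "exp (- t * lam k) \<le> exp (- t * real k)"
    using assms by simp
  then show "exp (- t * lam k) \<le> exp (- t) ^ k"
    by (simp add: mult.commute flip: exp_of_nat_mult)
qed simp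

lemma not_summable_on_ge_one:
  fixes g :: "'a \<Rightarrow> real"
  assumes "infinite A" and "\<And>x. x \<in> A \<Longrightarrow> 1 \<le> g x"
  shows "\<not> g summable_on A"
proof
  assume "g summable_on A"
  then have "(\<lambda>_. 1 :: real) summable_on A"
    by (rule summable_on_comparison_test) (use assms(2) in auto)
  then show False
    using infsum_diverge_constant[OF assms(1), of "1 :: real"] by simp
qed

lemma checkE_if_block_norm2_le:
  assumes v: "v \<in> prodE S d" and t: "0 < t" and sparse: "(\<lambda>l. exp (- t * l)) summable_on L"
    and le: "\<And>l. block_norm2 v l \<le> (if l \<in> L then (exp (- t * l))\<^sup>2 else 0)"
  shows "v \<in> checkE S d"
proof -
  have "block_norm2 (scale (t / 2) v) l \<le> (if l \<in> L then exp (- t * l) else 0)" for l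
  proof -
    have "exp (t * l) * block_norm2 v l \<le> exp (t * l) * (if l \<in> L then (exp (- t * l))\<^sup>2 else 0)"
      using le[of l] by simp
    also have "\<dots> = (if l \<in> L then exp (- t * l) else 0)"
      by (simp add: power2_eq_square flip: exp_add)
    finally show ?thesis
      by (simp add: block_norm2_scale)
  qed
  moreover have "(\<lambda>l. if l \<in> L then exp (- t * l) else 0) summable_on UNIV"
    using sparse by (rule summable_on_cong_neutral[THEN iffD1, rotated -1]) auto
  ultimately have "in_hilb S d (scale (t / 2) v)"
    using scale_prodE[OF v] block_norm2_nonneg
    by (auto simp: in_hilb_iff_block_norm2_summable intro: summable_on_comparison_test)
  then show ?thesis
    unfolding checkE_def using v t by force
qed

lemma not_in_checkE_if_block_norm2_ge_one:
  assumes L: "infinite L" "\<And>l. l \<in> L \<Longrightarrow> 0 \<le> l" and ge: "\<And>l. l \<in> L \<Longrightarrow> 1 \<le> block_norm2 u l"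
  shows "u \<notin> checkE S d"
proof
  assume "u \<in> checkE S d"
  then obtain \<tau> where \<tau>: "0 < Re \<tau>" "in_hilb S d (scale \<tau> u)" and uE: "u \<in> prodE S d"
    unfolding checkE_def by blast
  have "block_norm2 (scale \<tau> u) summable_on UNIV"
    using \<tau>(2) scale_prodE[OF uE] by (simp add: in_hilb_iff_block_norm2_summable)
  then have "block_norm2 (scale \<tau> u) summable_on L"
    by (rule summable_on_subset_banach) simp
  moreover have "1 \<le> block_norm2 (scale \<tau> u) l" if "l \<in> L" for l
  proof -
    have "1 \<le> exp (2 * Re \<tau> * l)"
      using L(2)[OF that] \<tau>(1) by simp
    then show ?thesis
      unfolding block_norm2_scale using ge[OF that] mult_mono[of 1 _ 1] by fastforce
  qed
  ultimately show False
    using not_summable_on_ge_one[OF L(1)] by blast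
qed

context blockwise_map
begin

lemma opnorm_exceeds_unbounded:
  assumes "\<not> (\<exists>C>0. \<forall>l\<in>S0 \<inter> S1. opnorm (d0 l) (d1 l) (f l) < C * exp (t * l))"
  shows "\<exists>l\<in>{l \<in> S0 \<inter> S1. exp (t * l) < opnorm (d0 l) (d1 l) (f l)}. B \<le> l"
proof (rule ccontr)
  assume "\<not> ?thesis"
  then have "\<And>l. l \<in> S0 \<inter> S1 \<Longrightarrow> l \<notin> {l \<in> S0. l \<le> B} \<Longrightarrow>
      opnorm (d0 l) (d1 l) (f l) \<le> exp (t * l)"
    by force
  moreover have "finite {l \<in> S0. l \<le> B}"
    using spectral0 unfolding spectral_data_def by blast
  ultimately show False
    using bounded_by_multiple_off_finite[of "{l \<in> S0. l \<le> B}" "S0 \<inter> S1"] assms by auto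
qed

lemma weighted_witness_vector:
  assumes L: "L \<subseteq> S0 \<inter> S1"
    and large: "\<And>l. l \<in> L \<Longrightarrow> exp (t * l) < opnorm (d0 l) (d1 l) (f l)"
  obtains v where "v \<in> prodE S0 d0"
    and "\<And>l. block_norm2 v l \<le> (if l \<in> L then (exp (- t * l))\<^sup>2 else 0)"
    and "\<And>l. l \<in> L \<Longrightarrow> 1 \<le> block_norm2 (T v) l"
proof -
  have "\<forall>l\<in>L. \<exists>x. x \<in> eig (d0 l) \<and> vnorm (d0 l) x \<le> 1 \<and> exp (t * l) < vnorm (d1 l) (f l x)"
    using less_opnorm_witness[OF lin large] L by blast
  then obtain x where x: "\<And>l. l \<in> L \<Longrightarrow> x l \<in> eig (d0 l)" "\<And>l. l \<in> L \<Longrightarrow> vnorm (d0 l) (x l) \<le> 1"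
    "\<And>l. l \<in> L \<Longrightarrow> exp (t * l) < vnorm (d1 l) (f l (x l))"
    by metis
  define v where "v l = (if l \<in> L then (\<lambda>i. complex_of_real (exp (- t * l)) * x l i) else (\<lambda>i. 0))"
    for l
  have v_eig: "v l \<in> eig (d0 l)" if "l \<in> L" for l
    using x(1)[OF that] that unfolding v_def eig_def by simp
  have vE: "v \<in> prodE S0 d0"
    unfolding prodE_def using v_eig L by (auto simp: v_def zero_in_eig)
  moreover have "block_norm2 v l \<le> (if l \<in> L then (exp (- t * l))\<^sup>2 else 0)" for l
  proof (cases "l \<in> L")
    case True
    have "vnorm (d0 l) (v l) = exp (- t * l) * vnorm (d0 l) (x l)"
      using True by (simp add: v_def vnorm_scale)
    then have "vnorm (d0 l) (v l) \<le> exp (- t * l)"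
      using x(2)[OF True] by (simp add: mult_left_le)
    then show ?thesis
      using True unfolding block_norm2_eig[of v l "d0 l", OF v_eig[OF True]]
      by (simp add: power_mono vnorm_nonneg)
  qed (simp add: block_norm2_def v_def)
  moreover have "1 \<le> block_norm2 (T v) l" if l: "l \<in> L" for l
  proof -
    have l01: "l \<in> S0 \<inter> S1"
      using l L by blast
    have "T v l = (\<lambda>i. complex_of_real (exp (- t * l)) * f l (x l) i)"
      using l lin_on_scale[OF lin[OF l01] x(1)[OF l]] by (simp add: fHilb_inside[OF l01] v_def)
    then have "vnorm (d1 l) (T v l) = exp (- t * l) * vnorm (d1 l) (f l (x l))"
      by (simp add: vnorm_scale)
    also have "\<dots> > exp (- t * l) * exp (t * l)"
      using x(3)[OF l] by simp
    finally have "1 < vnorm (d1 l) (T v l)"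
      by (simp flip: exp_add)
    then show ?thesis
      unfolding block_norm2_eig[of "T v" l "d1 l", OF fHilb_eig[OF vE l01]]
      by (simp add: one_le_power)
  qed
  ultimately show ?thesis
    using that by blast
qed

lemma opnorm_subexp_if_maps_checkE:
  assumes maps: "\<And>v. v \<in> checkE S0 d0 \<Longrightarrow> T v \<in> checkE S1 d1" and t: "0 < t"
  shows "\<exists>C>0. \<forall>l\<in>S0 \<inter> S1. opnorm (d0 l) (d1 l) (f l) < C * exp (t * l)"
proof (rule ccontr)
  assume "\<not> ?thesis"
  note unbounded = opnorm_exceeds_unbounded[OF this]
  obtain lam where
    lam: "\<And>k. lam k \<in> {l \<in> S0 \<inter> S1. exp (t * l) < opnorm (d0 l) (d1 l) (f l)}"
      "\<And>k. real k \<le> lam k" "strict_mono lam"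
    using unbounded_imp_sparse_sequence[OF unbounded] by blast
  have inj: "inj lam"
    using lam(3) strict_mono_imp_inj_on by blast
  have sparse: "(\<lambda>l. exp (- t * l)) summable_on range lam"
    unfolding summable_on_reindex[OF inj] comp_def using summable_on_exp_sparse[OF t lam(2)] .
  have infinite: "infinite (range lam)"
    using inj finite_imageD by blast
  have nonneg: "0 \<le> l" if "l \<in> range lam" for l
    using that lam(2) of_nat_0_le_iff order_trans by blast
  obtain v where vE: "v \<in> prodE S0 d0"
    and small: "\<And>l. block_norm2 v l \<le> (if l \<in> range lam then (exp (- t * l))\<^sup>2 else 0)"
    and large: "\<And>l. l \<in> range lam \<Longrightarrow> 1 \<le> block_norm2 (T v) l"
    using weighted_witness_vector[of "range lam" t] lam(1) by blast
  have "v \<in> checkE S0 d0"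
    by (rule checkE_if_block_norm2_le[OF vE t sparse small])
  moreover have "T v \<notin> checkE S1 d1"
    by (rule not_in_checkE_if_block_norm2_ge_one[OF infinite nonneg large])
  ultimately show False
    using maps by blast
qed

end

theorem lemma3p40:
  fixes S0 S1 :: "real set" and d0 d1 :: "real \<Rightarrow> nat"
    and f :: "real \<Rightarrow> (nat \<Rightarrow> complex) \<Rightarrow> (nat \<Rightarrow> complex)"
  assumes "spectral_data S0 d0" and "spectral_data S1 d1"
    and "\<And>l. l \<in> S0 \<inter> S1 \<Longrightarrow> lin_on (eig (d0 l)) (f l)"
    and "\<And>l. l \<in> S0 \<inter> S1 \<Longrightarrow> f l ` eig (d0 l) \<subseteq> eig (d1 l)"
  shows "(\<exists>fc fh.
            continuous_map (check_top S0 d0) (check_top S1 d1) fc \<and> lin_fam (checkE S0 d0) fc \<and>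
            continuous_map (hat_top S0 d0) (hat_top S1 d1) fh \<and> lin_fam (hatE S0 d0) fh \<and>
            (\<forall>v\<in>checkE S0 d0. fh v = fc v) \<and>
            (\<forall>v\<in>checkE S0 d0. fHilb S0 S1 f v = fc v))
       \<longleftrightarrow> (\<forall>t>0. \<exists>C>0. \<forall>l\<in>S0 \<inter> S1. opnorm (d0 l) (d1 l) (f l) < C * exp (t * l))"
    (is "?morphism \<longleftrightarrow> ?subexp")
proof
  interpret blockwise_map S0 S1 d0 d1 f
    using assms by unfold_locales
  assume ?morphism
  then obtain fc where fc: "continuous_map (check_top S0 d0) (check_top S1 d1) fc"
    and fc_eq: "\<forall>v\<in>checkE S0 d0. fHilb S0 S1 f v = fc v"
    by blast
  have "T v \<in> checkE S1 d1" if "v \<in> checkE S0 d0" for v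
    using continuous_map_image_subset_topspace[OF fc] fc_eq that
    by (auto simp: topspace_check_top[OF spectral0] topspace_check_top[OF spectral1])
  then show ?subexp
    using opnorm_subexp_if_maps_checkE by blast
next
  assume ?subexp
  then interpret subexp_blockwise_map S0 S1 d0 d1 f
    using assms by unfold_locales blast+
  have "lin_fam (checkE S0 d0) T" and "lin_fam (hatE S0 d0) T"
    unfolding lin_fam_def using fHilb_lincomb checkE_prodE hatE_prodE by blast+
  then show ?morphism
    using continuous_map_check continuous_map_hat by blast
qed

end
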